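(* Let $X$ be a real or complex Banach space, $(A(n))_{n\in\mathbb{N}}$ a sequence in $\mathcal{B}(X)$, and $P:\mathbb{N}\to\mathcal{B}(X)$ a family of projections compatible with the system $x_{n+1}=A(n)x_n$, with complementary family $Q(n)=I-P(n)$. Then the system is $P$-uniformly exponentially dichotomic if and only if there exist constants $D,d>0$ such that \[ \sum_{j=m}^{\infty}e^{d(j-m)}\|\mathcal{A}_P(j,n)x\|+\sum_{k=n}^{m}e^{d(m-k)}\|\mathcal{A}_Q(k,n)x\|\le D\big(\|\mathcal{A}_P(m,n)x\|+\|\mathcal{A}_Q(m,n)x\|\big) \] for all $(m,n)\in\Delta$ and all $x\in X$.
   Context: $\mathbb{N}$ denotes the set of positive integers; $\mathcal{B}(X)$ is the Banach algebra of bounded linear operators on $X$, and $I$ is the identity operator. $\Delta=\{(m,n)\in\mathbb{N}^2: m\ge n\}$. A family of projections is a map $P:\mathbb{N}\to\mathcal{B}(X)$ with $P(n)^2=P(n)$ for all $n$; its complementary family is $Q(n)=I-P(n)$. $P$ is compatible with the system $x_{n+1}=A(n)x_n$ if $A(n+1)P(n)=P(n+1)A(n+1)$ for all $n\in\mathbb{N}$. For $(m,n)\in\Delta$ define $\mathcal{A}_P(m,n)=A(m)\cdots A(n+1)P(n)$ if $m>n$ and $\mathcal{A}_P(n,n)=P(n)$; similarly $\mathcal{A}_Q(m,n)=A(m)\cdots A(n+1)Q(n)$ if $m>n$ and $\mathcal{A}_Q(n,n)=Q(n)$. The system is $P$-uniformly exponentially dichotomic if there exist constants $N\ge1$ and $\alpha>0$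 such that $e^{\alpha(m-n)}\big(\|\mathcal{A}_P(m,n)x\|+\|Q(n)x\|\big)\le N\big(\|P(n)x\|+\|\mathcal{A}_Q(m,n)x\|\big)$ for all $(m,n)\in\Delta$, $x\in X$. *)

theory Defs
  imports "HOL-Analysis.Analysis"
begin

text \<open>Time indices are positive naturals (n \<ge> 1). Operators in B(X) are bounded linear maps
  'a \<Rightarrow>L 'a on a Banach space 'a (real Banach space; complex ones are included as real ones).\<close>

definition proj_family :: "(nat \<Rightarrow> ('a::real_normed_vector \<Rightarrow>\<^sub>L 'a)) \<Rightarrow> bool" where
  "proj_family P \<longleftrightarrow> (\<forall>n\<ge>1. P n o\<^sub>L P n = P n)"

definition compl_family :: "(nat \<Rightarrow> ('a::real_normed_vector \<Rightarrow>\<^sub>L 'a)) \<Rightarrow> nat \<Rightarrow> ('a \<Rightarrow>\<^sub>L 'a)" where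
  "compl_family P n = id_blinfun - P n"

definition compatible :: "(nat \<Rightarrow> ('a::real_normed_vector \<Rightarrow>\<^sub>L 'a)) \<Rightarrow> (nat \<Rightarrow> ('a \<Rightarrow>\<^sub>L 'a)) \<Rightarrow> bool" where
  "compatible A P \<longleftrightarrow> (\<forall>n\<ge>1. A (n+1) o\<^sub>L P n = P (n+1) o\<^sub>L A (n+1))"

fun evol :: "(nat \<Rightarrow> ('a::real_normed_vector \<Rightarrow>\<^sub>L 'a)) \<Rightarrow> nat \<Rightarrow> nat \<Rightarrow> ('a \<Rightarrow>\<^sub>L 'a)" where
  "evol A n 0 = id_blinfun"
| "evol A n (Suc k) = A (n + Suc k) o\<^sub>L evol A n k"

text \<open>\<A>_P(m,n) = A(m)...A(n+1)P(n) for m > n, P(n) for m = n.\<close>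
definition cocP :: "(nat \<Rightarrow> ('a::real_normed_vector \<Rightarrow>\<^sub>L 'a)) \<Rightarrow> (nat \<Rightarrow> ('a \<Rightarrow>\<^sub>L 'a)) \<Rightarrow> nat \<Rightarrow> nat \<Rightarrow> ('a \<Rightarrow>\<^sub>L 'a)" where
  "cocP A P m n = evol A n (m - n) o\<^sub>L P n"

definition cocQ :: "(nat \<Rightarrow> ('a::real_normed_vector \<Rightarrow>\<^sub>L 'a)) \<Rightarrow> (nat \<Rightarrow> ('a \<Rightarrow>\<^sub>L 'a)) \<Rightarrow> nat \<Rightarrow> nat \<Rightarrow> ('a \<Rightarrow>\<^sub>L 'a)" where
  "cocQ A P m n = evol A n (m - n) o\<^sub>L compl_family P n"

definition P_ued :: "(nat \<Rightarrow> ('a::real_normed_vector \<Rightarrow>\<^sub>L 'a)) \<Rightarrow> (nat \<Rightarrow> ('a \<Rightarrow>\<^sub>L 'a)) \<Rightarrow> bool" where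
  "P_ued A P \<longleftrightarrow> (\<exists>N::real. \<exists>\<alpha>::real. N \<ge> 1 \<and> \<alpha> > 0 \<and>
     (\<forall>m n x. 1 \<le> n \<and> n \<le> m \<longrightarrow>
        exp (\<alpha> * (real m - real n)) *
          (norm (blinfun_apply (cocP A P m n) x) + norm (blinfun_apply (compl_family P n) x))
        \<le> N * (norm (blinfun_apply (P n) x) + norm (blinfun_apply (cocQ A P m n) x))))"

end

theory Submission
  imports Defs
begin

text \<open>If the system is dichotomic with constants N, \<alpha>, then by compatibility and the cocycle
  property the stable part decays and the unstable part grows at rate \<alpha> from every intermediate
  time on; halving the rate makes both sides summable against a geometric series, which gives the
  summed inequality with d = \<alpha>/2 and D = N/(1 - e^{-\<alpha>/2}). Conversely, testing the summed
  inequality on P(n)x keeps only the series term with index m - n, and testing it on Q(n)x keeps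
  only the sum term with index n; together these are the dichotomy inequality with N = max 1 D.\<close>

definition dichotomic_with ::
  "(nat \<Rightarrow> ('a::real_normed_vector \<Rightarrow>\<^sub>L 'a)) \<Rightarrow> (nat \<Rightarrow> ('a \<Rightarrow>\<^sub>L 'a)) \<Rightarrow> real \<Rightarrow> real \<Rightarrow> bool" where
  "dichotomic_with A P N \<alpha> \<longleftrightarrow> (\<forall>m n x. 1 \<le> n \<and> n \<le> m \<longrightarrow>
     exp (\<alpha> * (real m - real n)) * (norm (cocP A P m n x) + norm (compl_family P n x))
       \<le> N * (norm (P n x) + norm (cocQ A P m n x)))"

definition summed_dichotomic_with ::
  "(nat \<Rightarrow> ('a::real_normed_vector \<Rightarrow>\<^sub>L 'a)) \<Rightarrow> (nat \<Rightarrow> ('a \<Rightarrow>\<^sub>L 'a)) \<Rightarrow> real \<Rightarrow> real \<Rightarrow> bool" where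
  "summed_dichotomic_with A P D d \<longleftrightarrow> (\<forall>m n x. 1 \<le> n \<and> n \<le> m \<longrightarrow>
     summable (\<lambda>i. exp (d * real i) * norm (cocP A P (m + i) n x)) \<and>
     (\<Sum>i. exp (d * real i) * norm (cocP A P (m + i) n x))
       + (\<Sum>k=n..m. exp (d * (real m - real k)) * norm (cocQ A P k n x))
       \<le> D * (norm (cocP A P m n x) + norm (cocQ A P m n x)))"

lemma P_ued_iff_dichotomic_with:
  "P_ued A P \<longleftrightarrow> (\<exists>N \<alpha>. N \<ge> 1 \<and> \<alpha> > 0 \<and> dichotomic_with A P N \<alpha>)"
  unfolding P_ued_def dichotomic_with_def by blast

lemma evol_add: "evol A n (a + b) x = evol A (n + a) b (evol A n a x)"
  by (induction b arbitrary: x) (auto simp: add.assoc)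

lemma evol_commute_proj:
  assumes "compatible A P" "n \<ge> 1"
  shows "P (n + k) (evol A n k x) = evol A n k (P n x)"
proof (induction k)
  case (Suc k)
  have "A (n + k + 1) o\<^sub>L P (n + k) = P (n + k + 1) o\<^sub>L A (n + k + 1)"
    using assms unfolding compatible_def by auto
  then have "P (n + k + 1) (A (n + k + 1) y) = A (n + k + 1) (P (n + k) y)" for y
    by (metis blinfun_apply_blinfun_compose)
  with Suc show ?case by simp
qed simp

lemma compl_family_apply: "compl_family P n x = x - P n x"
  by (simp add: compl_family_def blinfun.diff_left)

context
  fixes P :: "nat \<Rightarrow> ('a::real_normed_vector \<Rightarrow>\<^sub>L 'a)" and n :: nat
  assumes proj: "proj_family P" and n: "n \<ge> 1"
begin

lemma proj_idem: "P n (P n x) = P n x"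
  using proj n unfolding proj_family_def by (metis blinfun_apply_blinfun_compose)

lemma proj_compl: "P n (compl_family P n x) = 0"
  by (simp add: compl_family_apply proj_idem blinfun.diff_right)

lemma compl_proj: "compl_family P n (P n x) = 0"
  by (simp add: compl_family_apply proj_idem)

lemma compl_idem: "compl_family P n (compl_family P n x) = compl_family P n x"
  by (simp add: compl_family_apply proj_idem blinfun.diff_right)

lemma cocP_proj: "cocP A P m n (P n x) = cocP A P m n x"
  by (simp add: cocP_def proj_idem)

lemma cocQ_proj: "cocQ A P m n (P n x) = 0"
  by (simp add: cocQ_def compl_proj)

lemma cocP_compl: "cocP A P m n (compl_family P n x) = 0"
  by (simp add: cocP_def proj_compl)

lemma cocQ_compl: "cocQ A P m n (compl_family P n x) = cocQ A P m n x"
  by (simp add: cocQ_def compl_idem)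

lemma summed_dichotomic_with_stable_bound:
  assumes summed: "summed_dichotomic_with A P D d" and "n \<le> m"
  shows "exp (d * (real m - real n)) * norm (cocP A P m n x) \<le> D * norm (P n x)"
proof -
  define f where "f = (\<lambda>i. exp (d * real i) * norm (cocP A P (n + i) n x))"
  have "summable f \<and> suminf f \<le> D * norm (P n x)"
    using summed[unfolded summed_dichotomic_with_def, rule_format, of n n "P n x"] n
    by (simp add: f_def cocP_proj cocQ_proj cocP_def proj_idem)
  moreover from this have "f (m - n) \<le> suminf f"
    by (intro sum_le_suminf[where I = "{m - n}", simplified]) (auto simp: f_def)
  ultimately show ?thesis
    using assms(2) by (simp add: f_def of_nat_diff)
qed

lemma summed_dichotomic_with_unstable_bound:
  assumes summed: "summed_dichotomic_with A P D d" and "n \<le> m"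
  shows "exp (d * (real m - real n)) * norm (compl_family P n x) \<le> D * norm (cocQ A P m n x)"
proof -
  define g where "g = (\<lambda>k. exp (d * (real m - real k)) * norm (cocQ A P k n x))"
  have "sum g {n..m} \<le> D * norm (cocQ A P m n x)"
    using summed[unfolded summed_dichotomic_with_def, rule_format, of n m "compl_family P n x"]
      n \<open>n \<le> m\<close>
    by (simp add: g_def cocP_compl cocQ_compl)
  moreover have "g n \<le> sum g {n..m}"
    using assms(2) by (intro member_le_sum) (auto simp: g_def)
  ultimately show ?thesis
    by (simp add: g_def cocQ_def)
qed

end

lemma sum_power_reverse_le:
  fixes r :: real
  assumes "0 \<le> r" "r < 1"
  shows "(\<Sum>k=n..m. r ^ (m - k)) \<le> 1 / (1 - r)"
proof -
  have "inj_on (\<lambda>k. m - k) {n..m}" by (rule inj_onI) auto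
  then have "(\<Sum>k=n..m. r ^ (m - k)) = (\<Sum>j\<in>(\<lambda>k. m - k) ` {n..m}. r ^ j)"
    by (simp add: sum.reindex o_def)
  also have "\<dots> \<le> (\<Sum>j. r ^ j)"
    using assms by (intro sum_le_suminf summable_geometric) auto
  also have "\<dots> = 1 / (1 - r)"
    using assms by (simp add: suminf_geometric)
  finally show ?thesis .
qed

lemma exp_half_rate_le:
  fixes \<alpha> t c :: real
  assumes "exp (\<alpha> * s) * t \<le> c"
  shows "exp (\<alpha> / 2 * s) * t \<le> exp (- \<alpha> / 2 * s) * c"
proof -
  have "exp (\<alpha> / 2 * s) * t = exp (- \<alpha> / 2 * s) * (exp (\<alpha> * s) * t)"
    by (simp add: mult.assoc[symmetric] exp_add[symmetric] algebra_simps)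
  also have "\<dots> \<le> exp (- \<alpha> / 2 * s) * c"
    using assms by (intro mult_left_mono) auto
  finally show ?thesis .
qed

context
  fixes A P :: "nat \<Rightarrow> ('a::real_normed_vector \<Rightarrow>\<^sub>L 'a)"
  assumes proj: "proj_family P" and comp: "compatible A P"
begin

lemma proj_cocP:
  assumes "1 \<le> n" "n \<le> m"
  shows "P m (cocP A P m n x) = cocP A P m n x"
  using evol_commute_proj[OF comp assms(1), of "m - n"] proj_idem[OF proj assms(1)] assms
  by (simp add: cocP_def)

lemma proj_cocQ:
  assumes "1 \<le> n" "n \<le> m"
  shows "P m (cocQ A P m n x) = 0"
  using evol_commute_proj[OF comp assms(1), of "m - n"] proj_compl[OF proj assms(1)] assms
  by (simp add: cocQ_def)

lemma cocP_cocP: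
  assumes "1 \<le> n" "n \<le> m" "m \<le> j"
  shows "cocP A P j m (cocP A P m n x) = cocP A P j n x"
  using evol_add[of A n "m - n" "j - m"] proj_cocP[OF assms(1,2)] assms
  by (simp add: cocP_def)

lemma cocQ_cocP:
  assumes "1 \<le> n" "n \<le> m"
  shows "cocQ A P j m (cocP A P m n x) = 0"
  using proj_cocP[OF assms] by (simp add: cocQ_def compl_family_apply)

lemma cocQ_cocQ:
  assumes "1 \<le> n" "n \<le> k" "k \<le> m"
  shows "cocQ A P m k (cocQ A P k n x) = cocQ A P m n x"
  using evol_add[of A n "k - n" "m - k"] proj_cocQ[OF assms(1,2)] assms
  by (simp add: cocQ_def compl_family_apply)

lemma cocP_cocQ:
  assumes "1 \<le> n" "n \<le> k"
  shows "cocP A P m k (cocQ A P k n x) = 0"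
  using proj_cocQ[OF assms] by (simp add: cocP_def)

text \<open>The dichotomy inequality applied at the intermediate time to the image of x: the
  unwanted component vanishes on each side.\<close>

lemma dichotomic_with_stable_decay:
  assumes dich: "dichotomic_with A P N \<alpha>" and mn: "1 \<le> n" "n \<le> m" "m \<le> j"
  shows "exp (\<alpha> * (real j - real m)) * norm (cocP A P j n x) \<le> N * norm (cocP A P m n x)"
proof -
  define y where "y = cocP A P m n x"
  have "exp (\<alpha> * (real j - real m)) * (norm (cocP A P j m y) + norm (compl_family P m y))
      \<le> N * (norm (P m y) + norm (cocQ A P j m y))"
    using dich mn unfolding dichotomic_with_def by auto
  then show ?thesis
    using mn by (simp add: y_def cocP_cocP cocQ_cocP proj_cocP compl_family_apply)
qed

lemma dichotomic_with_unstable_growth: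
  assumes dich: "dichotomic_with A P N \<alpha>" and kn: "1 \<le> n" "n \<le> k" "k \<le> m"
  shows "exp (\<alpha> * (real m - real k)) * norm (cocQ A P k n x) \<le> N * norm (cocQ A P m n x)"
proof -
  define y where "y = cocQ A P k n x"
  have "exp (\<alpha> * (real m - real k)) * (norm (cocP A P m k y) + norm (compl_family P k y))
      \<le> N * (norm (P k y) + norm (cocQ A P m k y))"
    using dich kn unfolding dichotomic_with_def by auto
  then show ?thesis
    using kn by (simp add: y_def cocQ_cocQ cocP_cocQ proj_cocQ compl_family_apply)
qed


lemma summed_dichotomic_with_imp_dichotomic_with:
  assumes "summed_dichotomic_with A P D d"
  shows "dichotomic_with A P (max 1 D) d"
  unfolding dichotomic_with_def
proof (intro allI impI)
  fix m n :: nat and x assume mn: "1 \<le> n \<and> n \<le> m"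
  have "exp (d * (real m - real n)) * (norm (cocP A P m n x) + norm (compl_family P n x))
      \<le> D * (norm (P n x) + norm (cocQ A P m n x))"
    using summed_dichotomic_with_stable_bound[OF proj _ assms, of n m x]
      summed_dichotomic_with_unstable_bound[OF proj _ assms, of n m x] mn
    by (simp add: distrib_left)
  also have "\<dots> \<le> max 1 D * (norm (P n x) + norm (cocQ A P m n x))"
    by (intro mult_right_mono) auto
  finally show "exp (d * (real m - real n)) * (norm (cocP A P m n x) + norm (compl_family P n x))
      \<le> max 1 D * (norm (P n x) + norm (cocQ A P m n x))" .
qed

lemma dichotomic_with_stable_series:
  assumes dich: "dichotomic_with A P N \<alpha>" and "\<alpha> > 0" "1 \<le> n" "n \<le> m"
  defines "r \<equiv> exp (- \<alpha> / 2)"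
  shows "summable (\<lambda>i. exp (\<alpha> / 2 * real i) * norm (cocP A P (m + i) n x))"
    and "(\<Sum>i. exp (\<alpha> / 2 * real i) * norm (cocP A P (m + i) n x))
           \<le> N * norm (cocP A P m n x) / (1 - r)"
proof -
  let ?a = "norm (cocP A P m n x)"
  have r: "0 \<le> r" "r < 1" using \<open>\<alpha> > 0\<close> by (auto simp: r_def)
  have term_le: "exp (\<alpha> / 2 * real i) * norm (cocP A P (m + i) n x) \<le> N * ?a * r ^ i" for i
    using exp_half_rate_le[OF dichotomic_with_stable_decay[OF dich assms(3,4), of "m + i" x]]
    by (simp add: r_def exp_of_nat_mult[symmetric] mult_ac)
  have geom: "summable (\<lambda>i. N * ?a * r ^ i)"
    using r by (intro summable_mult summable_geometric) auto
  show sums: "summable (\<lambda>i. exp (\<alpha> / 2 * real i) * norm (cocP A P (m + i) n x))"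
    by (rule summable_comparison_test'[OF geom, of 0]) (use term_le in auto)
  have "(\<Sum>i. exp (\<alpha> / 2 * real i) * norm (cocP A P (m + i) n x)) \<le> (\<Sum>i. N * ?a * r ^ i)"
    by (rule suminf_le[OF term_le sums geom])
  also have "\<dots> = N * ?a / (1 - r)"
    using r by (simp add: suminf_mult suminf_geometric)
  finally show "(\<Sum>i. exp (\<alpha> / 2 * real i) * norm (cocP A P (m + i) n x)) \<le> N * ?a / (1 - r)" .
qed

lemma dichotomic_with_unstable_sum:
  assumes dich: "dichotomic_with A P N \<alpha>" and "N \<ge> 0" "\<alpha> > 0" "1 \<le> n"
  defines "r \<equiv> exp (- \<alpha> / 2)"
  shows "(\<Sum>k=n..m. exp (\<alpha> / 2 * (real m - real k)) * norm (cocQ A P k n x))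
           \<le> N * norm (cocQ A P m n x) / (1 - r)"
proof -
  let ?b = "norm (cocQ A P m n x)"
  have r: "0 \<le> r" "r < 1" using \<open>\<alpha> > 0\<close> by (auto simp: r_def)
  have term_le: "exp (\<alpha> / 2 * (real m - real k)) * norm (cocQ A P k n x) \<le> N * ?b * r ^ (m - k)"
    if "k \<in> {n..m}" for k
    using exp_half_rate_le[OF dichotomic_with_unstable_growth[OF dich assms(4), of k m x]] that
    by (simp add: r_def exp_of_nat_mult[symmetric] of_nat_diff mult_ac)
  have "(\<Sum>k=n..m. exp (\<alpha> / 2 * (real m - real k)) * norm (cocQ A P k n x))
      \<le> (\<Sum>k=n..m. N * ?b * r ^ (m - k))"
    by (rule sum_mono[OF term_le])
  also have "\<dots> = N * ?b * (\<Sum>k=n..m. r ^ (m - k))"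
    by (simp add: sum_distrib_left)
  also have "\<dots> \<le> N * ?b * (1 / (1 - r))"
    using sum_power_reverse_le[OF r] \<open>N \<ge> 0\<close> by (intro mult_left_mono) auto
  finally show ?thesis by simp
qed

lemma dichotomic_with_imp_summed_dichotomic_with:
  assumes "dichotomic_with A P N \<alpha>" "N \<ge> 0" "\<alpha> > 0"
  shows "summed_dichotomic_with A P (N / (1 - exp (- \<alpha> / 2))) (\<alpha> / 2)"
  unfolding summed_dichotomic_with_def
proof (intro allI impI conjI)
  fix m n :: nat and x assume mn: "1 \<le> n \<and> n \<le> m"
  show "summable (\<lambda>i. exp (\<alpha> / 2 * real i) * norm (cocP A P (m + i) n x))"
    using dichotomic_with_stable_series(1)[OF assms(1,3)] mn by auto
  show "(\<Sum>i. exp (\<alpha> / 2 * real i) * norm (cocP A P (m + i) n x))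
      + (\<Sum>k=n..m. exp (\<alpha> / 2 * (real m - real k)) * norm (cocQ A P k n x))
      \<le> N / (1 - exp (- \<alpha> / 2)) * (norm (cocP A P m n x) + norm (cocQ A P m n x))"
    using add_mono[OF dichotomic_with_stable_series(2)[OF assms(1,3)]
        dichotomic_with_unstable_sum[OF assms]] mn
    by (simp add: add_divide_distrib distrib_left)
qed

end

theorem mainTheorem2:
  fixes A P :: "nat \<Rightarrow> ('a::banach \<Rightarrow>\<^sub>L 'a)"
  assumes "proj_family P" and "compatible A P"
  shows "P_ued A P \<longleftrightarrow>
    (\<exists>D::real. \<exists>d::real. D > 0 \<and> d > 0 \<and>
      (\<forall>m n x. 1 \<le> n \<and> n \<le> m \<longrightarrow>
         summable (\<lambda>i. exp (d * real i) * norm (blinfun_apply (cocP A P (m + i) n) x)) \<and>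
         (\<Sum>i. exp (d * real i) * norm (blinfun_apply (cocP A P (m + i) n) x))
         + (\<Sum>k=n..m. exp (d * (real m - real k)) * norm (blinfun_apply (cocQ A P k n) x))
         \<le> D * (norm (blinfun_apply (cocP A P m n) x) + norm (blinfun_apply (cocQ A P m n) x))))"
proof -
  have "P_ued A P \<longleftrightarrow> (\<exists>D d. D > 0 \<and> d > 0 \<and> summed_dichotomic_with A P D d)"
  proof
    assume "P_ued A P"
    then obtain N \<alpha> where "N \<ge> 1" "\<alpha> > 0" "dichotomic_with A P N \<alpha>"
      by (auto simp: P_ued_iff_dichotomic_with)
    moreover have "N / (1 - exp (- \<alpha> / 2)) > 0"
      using \<open>N \<ge> 1\<close> \<open>\<alpha> > 0\<close> by auto
    ultimately show "\<exists>D d. D > 0 \<and> d > 0 \<and> summed_dichotomic_with A P D d"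
      using dichotomic_with_imp_summed_dichotomic_with[OF assms, of N \<alpha>]
      by (intro exI[of _ "N / (1 - exp (- \<alpha> / 2))"] exI[of _ "\<alpha> / 2"]) auto
  next
    assume "\<exists>D d. D > 0 \<and> d > 0 \<and> summed_dichotomic_with A P D d"
    then obtain D d where "d > 0" "summed_dichotomic_with A P D d"
      by blast
    then show "P_ued A P"
      using summed_dichotomic_with_imp_dichotomic_with[OF assms]
      unfolding P_ued_iff_dichotomic_with by (intro exI[of _ "max 1 D"] exI[of _ d]) auto
  qed
  then show ?thesis
    unfolding summed_dichotomic_with_def .
qed

end
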